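(* Let $E=(C,V)$ be an approval election with $C$ nonempty and $V$ nonempty. Then $\mathrm{av\text{-}agr}(E)=1$ if and only if $E$ is an identity election, and $\mathrm{av\text{-}agr}(E)=0$ if and only if every candidate $c\in C$ is approved by exactly half of the voters, i.e. $|A(c)|=|V|/2$ for all $c\in C$.
   Context: An (approval) election is a pair $E=(C,V)$ where $C=\{c_1,\dots,c_m\}$ is a set of candidates and $V=(v_1,\dots,v_n)$ is a collection (with possible repetitions) of voters; each vote $v_i$ is a binary vector in $\{0,1\}^m$, with $v_i[j]=1$ meaning voter $v_i$ approves $c_j$. For a candidate $c$, $A(c)$ is the set of voters approving $c$. An identity election is one in which all votes are identical (all voters approve the same set of candidates). The Approval Agreement index is $\mathrm{av\text{-}agr}(E)=\frac{1}{|C|}\sum_{c\in C}\left|1-2\frac{|A(c)|}{|V|}\right|$. *)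

theory Defs
  imports Main Complex_Main
begin

text \<open>An approval election: a finite candidate set C and a list V of votes
  (repetitions allowed); each vote is the set of candidates it approves,
  i.e. the support of its binary vector over C, so each vote is a subset of C.\<close>

definition approval_election :: "'c set \<Rightarrow> 'c set list \<Rightarrow> bool" where
  "approval_election C V \<longleftrightarrow> finite C \<and> (\<forall>v \<in> set V. v \<subseteq> C)"

definition approvers :: "'c set list \<Rightarrow> 'c \<Rightarrow> nat set" where
  "approvers V c = {i. i < length V \<and> c \<in> V ! i}"

definition identity_election :: "'c set list \<Rightarrow> bool" where
  "identity_election V \<longleftrightarrow> (\<forall>i < length V. \<forall>j < length V. V ! i = V ! j)"

definition av_agr :: "'c set \<Rightarrow> 'c set list \<Rightarrow> real" where
  "av_agr C V = (1 / real (card C)) *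
     (\<Sum>c\<in>C. \<bar>1 - 2 * real (card (approvers V c)) / real (length V)\<bar>)"

end

theory Submission
  imports Defs
begin

text \<open>Each summand of the index is \<open>\<bar>1 - 2 s\<bar>\<close>, where \<open>s \<in> [0, 1]\<close> is the share of voters
  approving the candidate; it lies in \<open>[0, 1]\<close>, equals 1 exactly when \<open>s \<in> {0, 1}\<close> and
  vanishes exactly when \<open>s = 1/2\<close>. An average of numbers in \<open>[0, 1]\<close> is 1 (resp. 0) iff
  all of them are, so the index is 1 iff every candidate is approved by nobody or by
  everybody, which, as every vote is a subset of \<open>C\<close>, means that all votes coincide;
  and it is 0 iff every candidate is approved by exactly half of the voters.\<close>

lemma mean_eq_1_iff:
  fixes f :: "'a \<Rightarrow> 'b::linordered_field"
  assumes "finite A" "A \<noteq> {}" "\<And>x. x \<in> A \<Longrightarrow> f x \<le> 1"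
  shows "sum f A / of_nat (card A) = 1 \<longleftrightarrow> (\<forall>x\<in>A. f x = 1)"
proof -
  have "card A > 0" using assms(1,2) by (simp add: card_gt_0_iff)
  then have "sum f A / of_nat (card A) = 1 \<longleftrightarrow> (\<Sum>x\<in>A. 1 - f x) = 0"
    by (simp add: sum_subtractf)
  also have "\<dots> \<longleftrightarrow> (\<forall>x\<in>A. f x = 1)"
    using assms(1,3) by (subst sum_nonneg_eq_0_iff) auto
  finally show ?thesis .
qed

lemma mean_eq_0_iff:
  fixes f :: "'a \<Rightarrow> 'b::linordered_field"
  assumes "finite A" "\<And>x. x \<in> A \<Longrightarrow> 0 \<le> f x"
  shows "sum f A / of_nat (card A) = 0 \<longleftrightarrow> (\<forall>x\<in>A. f x = 0)"
  using assms by (cases "A = {}") (simp_all add: sum_nonneg_eq_0_iff)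

definition approval_share :: "'c set list \<Rightarrow> 'c \<Rightarrow> real" where
  "approval_share V c = real (card (approvers V c)) / real (length V)"

lemma approvers_subset: "approvers V c \<subseteq> {..<length V}"
  by (auto simp: approvers_def)

lemma finite_approvers: "finite (approvers V c)"
  using approvers_subset by (rule finite_subset) simp

lemma approval_share_nonneg: "0 \<le> approval_share V c"
  by (simp add: approval_share_def)

lemma approval_share_le_1: "approval_share V c \<le> 1"
proof -
  have "card (approvers V c) \<le> length V"
    using card_mono[OF finite_lessThan approvers_subset] by simp
  then show ?thesis by (simp add: approval_share_def divide_le_eq_1)
qed

lemma approval_share_eq_0_iff:
  assumes "V \<noteq> []"
  shows "approval_share V c = 0 \<longleftrightarrow> (\<forall>i<length V. c \<notin> V ! i)"
proof -
  have "approval_share V c = 0 \<longleftrightarrow> card (approvers V c) = 0"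
    using assms by (simp add: approval_share_def)
  also have "\<dots> \<longleftrightarrow> approvers V c = {}"
    by (simp add: card_eq_0_iff finite_approvers)
  finally show ?thesis by (auto simp: approvers_def)
qed

lemma approval_share_eq_1_iff:
  assumes "V \<noteq> []"
  shows "approval_share V c = 1 \<longleftrightarrow> (\<forall>i<length V. c \<in> V ! i)"
proof -
  have "approval_share V c = 1 \<longleftrightarrow> card (approvers V c) = card {..<length V}"
    using assms by (auto simp: approval_share_def)
  also have "\<dots> \<longleftrightarrow> approvers V c = {..<length V}"
    using approvers_subset by (metis card_subset_eq finite_lessThan)
  finally show ?thesis by (auto simp: approvers_def)
qed

lemma abs_1_minus_2_approval_share_le_1: "\<bar>1 - 2 * approval_share V c\<bar> \<le> 1"
  using approval_share_nonneg[of V c] approval_share_le_1[of V c] by linarith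

lemma abs_1_minus_2_approval_share_eq_1_iff:
  "\<bar>1 - 2 * approval_share V c\<bar> = 1 \<longleftrightarrow> approval_share V c = 1 \<or> approval_share V c = 0"
  using approval_share_nonneg[of V c] approval_share_le_1[of V c] by linarith

lemma abs_1_minus_2_approval_share_eq_0_iff:
  assumes "V \<noteq> []"
  shows "\<bar>1 - 2 * approval_share V c\<bar> = 0 \<longleftrightarrow>
    real (card (approvers V c)) = real (length V) / 2"
proof -
  have "\<bar>1 - 2 * approval_share V c\<bar> = 0 \<longleftrightarrow> approval_share V c = 1 / 2"
    by linarith
  also have "\<dots> \<longleftrightarrow> real (card (approvers V c)) = real (length V) / 2"
    using assms by (simp add: approval_share_def divide_eq_eq)
  finally show ?thesis .
qed

lemma av_agr_eq_mean:
  "av_agr C V = (\<Sum>c\<in>C. \<bar>1 - 2 * approval_share V c\<bar>) / card C"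
  by (simp add: av_agr_def approval_share_def)

lemma identity_election_iff_unanimous:
  assumes "\<forall>v\<in>set V. v \<subseteq> C"
  shows "identity_election V \<longleftrightarrow>
    (\<forall>c\<in>C. (\<forall>i<length V. c \<in> V ! i) \<or> (\<forall>i<length V. c \<notin> V ! i))"
proof
  assume "identity_election V"
  then show "\<forall>c\<in>C. (\<forall>i<length V. c \<in> V ! i) \<or> (\<forall>i<length V. c \<notin> V ! i)"
    unfolding identity_election_def by blast
next
  assume unanimous: "\<forall>c\<in>C. (\<forall>i<length V. c \<in> V ! i) \<or> (\<forall>i<length V. c \<notin> V ! i)"
  show "identity_election V"
    unfolding identity_election_def
  proof (intro allI impI)
    fix i j
    assume "i < length V" "j < length V"
    moreover from this have "V ! i \<subseteq> C" "V ! j \<subseteq> C"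
      using assms by simp_all
    ultimately show "V ! i = V ! j"
      using unanimous by blast
  qed
qed

theorem proposition1:
  fixes C :: "'c set" and V :: "'c set list"
  assumes "approval_election C V" and "C \<noteq> {}" and "V \<noteq> []"
  shows "(av_agr C V = 1 \<longleftrightarrow> identity_election V)
       \<and> (av_agr C V = 0 \<longleftrightarrow>
            (\<forall>c\<in>C. real (card (approvers V c)) = real (length V) / 2))"
proof
  have "finite C" and votes: "\<forall>v\<in>set V. v \<subseteq> C"
    using assms(1) by (auto simp: approval_election_def)
  have "av_agr C V = 1 \<longleftrightarrow> (\<forall>c\<in>C. \<bar>1 - 2 * approval_share V c\<bar> = 1)"
    unfolding av_agr_eq_mean using \<open>finite C\<close> assms(2)
    by (intro mean_eq_1_iff abs_1_minus_2_approval_share_le_1)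
  also have "\<dots> \<longleftrightarrow> (\<forall>c\<in>C. approval_share V c = 1 \<or> approval_share V c = 0)"
    by (simp only: abs_1_minus_2_approval_share_eq_1_iff)
  also have "\<dots> \<longleftrightarrow> identity_election V"
    using identity_election_iff_unanimous[OF votes] assms(3)
    by (simp add: approval_share_eq_0_iff approval_share_eq_1_iff)
  finally show "av_agr C V = 1 \<longleftrightarrow> identity_election V" .
  have "av_agr C V = 0 \<longleftrightarrow> (\<forall>c\<in>C. \<bar>1 - 2 * approval_share V c\<bar> = 0)"
    unfolding av_agr_eq_mean using \<open>finite C\<close> by (intro mean_eq_0_iff) auto
  also have "\<dots> \<longleftrightarrow> (\<forall>c\<in>C. real (card (approvers V c)) = real (length V) / 2)"
    by (simp only: abs_1_minus_2_approval_share_eq_0_iff[OF assms(3)])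
  finally show "av_agr C V = 0 \<longleftrightarrow> (\<forall>c\<in>C. real (card (approvers V c)) = real (length V) / 2)" .
qed

end
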